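(* Suppose $F$ is symmetric, i.e. $F(-i)=1-F(i)$ for all $i\in[-1/2,1/2]$, and let $R\in(0,1)$, $\beta=F(1/2-R)$. Then every receiver type $i\in[-1/2,1/2]$ accepts the recommendation (i.e. $U_i^B\ge U_i^0$ and $U_i^0\ge U_i^D$), and the value of the recommendation system is $V=\pi^B\Delta_O^B$.
   Context: Setting. Consumer types are $i\in[-1/2,1/2]$, distributed according to a continuous cumulative distribution function $F$ with full support on $[-1/2,1/2]$. A product has a quality vector $(Q_1,Q_2)\in\{0,1\}^2$; a type-$i$ consumer gets payoff $(1/2+i)Q_1+(1/2-i)Q_2$ from it. The versions $(1,1),(1,0),(0,1),(0,0)$ have prior probabilities $q_H,q_1,q_2,q_L$ respectively, all strictly positive and summing to $1$. One product carries a recommendation from a sender whose type is drawn from $F$ independently of the product; given a threshold $R\in(0,1)$, the sender gives a buy recommendation $B$ if her payoff from the product is at least $R$ and a don't-buy recommendation $D$ otherwise. Let $\phi_1(R)=1-F(R-1/2)$, $\phi_2(R)=F(1/2-R)$ (under symmetry both equal $\beta$), $\pi^B=q_H+q_1\phi_1(R)+q_2\phi_2(R)$ and $\pi^D=1-\pi^B$. Posteriors: $p^B_H=q_H/\pi^B$, $p^B_1=q_1\phi_1(R)/\pi^B$, $p^B_2=q_2\phi_2(R)/\pi^B$, $p^B_L=0$; $p^D_H=0$, $p^D_1=q_1(1-\phi_1(R))/\pi^D$, $p^D_2=q_2(1-\phi_2(R))/\pi^D$, $p^D_L=q_L/\pi^D$. For $r\in\{B,D\}$ let $U_i^r=p_H^r+(1/2+i)p_1^r+(1/2-i)p_2^r$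 and $U_i^0=q_H+(1/2+i)q_1+(1/2-i)q_2$. The objective effect of the buy recommendation is $\Delta_O^B=p_H^B-q_H+\frac{p_1^B-q_1}{2}+\frac{p_2^B-q_2}{2}$. The value of the recommendation system is $V=\pi^B\int_{-1/2}^{1/2}\max\{U_i^B-U_i^0,0\}\,dF(i)+\pi^D\int_{-1/2}^{1/2}\max\{U_i^D-U_i^0,0\}\,dF(i)$, the expected payoff gain of a receiver drawn from $F$ who optimally chooses between the recommended product and an unrecommended alternative. *)

theory Defs
  imports "HOL-Analysis.Analysis"
begin

text \<open>Consumer types live in [-1/2,1/2]; F is the CDF of the type distribution (a function
  on all reals, equal to 0 below -1/2 and 1 above 1/2).\<close>

definition phi1 :: "(real \<Rightarrow> real) \<Rightarrow> real \<Rightarrow> real" where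
  "phi1 F R = 1 - F (R - 1/2)"

definition phi2 :: "(real \<Rightarrow> real) \<Rightarrow> real \<Rightarrow> real" where
  "phi2 F R = F (1/2 - R)"

definition piB :: "(real \<Rightarrow> real) \<Rightarrow> real \<Rightarrow> real \<Rightarrow> real \<Rightarrow> real \<Rightarrow> real" where
  "piB F qH q1 q2 R = qH + q1 * phi1 F R + q2 * phi2 F R"

definition piD :: "(real \<Rightarrow> real) \<Rightarrow> real \<Rightarrow> real \<Rightarrow> real \<Rightarrow> real \<Rightarrow> real" where
  "piD F qH q1 q2 R = 1 - piB F qH q1 q2 R"

definition pB_H where "pB_H F qH q1 q2 R = qH / piB F qH q1 q2 R"
definition pB_1 where "pB_1 F qH q1 q2 R = q1 * phi1 F R / piB F qH q1 q2 R"
definition pB_2 where "pB_2 F qH q1 q2 R = q2 * phi2 F R / piB F qH q1 q2 R"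

definition pD_H :: "(real \<Rightarrow> real) \<Rightarrow> real \<Rightarrow> real \<Rightarrow> real \<Rightarrow> real \<Rightarrow> real" where
  "pD_H F qH q1 q2 R = 0"
definition pD_1 where "pD_1 F qH q1 q2 R = q1 * (1 - phi1 F R) / piD F qH q1 q2 R"
definition pD_2 where "pD_2 F qH q1 q2 R = q2 * (1 - phi2 F R) / piD F qH q1 q2 R"

definition UB :: "(real \<Rightarrow> real) \<Rightarrow> real \<Rightarrow> real \<Rightarrow> real \<Rightarrow> real \<Rightarrow> real \<Rightarrow> real" where
  "UB F qH q1 q2 R i = pB_H F qH q1 q2 R + (1/2 + i) * pB_1 F qH q1 q2 R
                        + (1/2 - i) * pB_2 F qH q1 q2 R"

definition UD :: "(real \<Rightarrow> real) \<Rightarrow> real \<Rightarrow> real \<Rightarrow> real \<Rightarrow> real \<Rightarrow> real \<Rightarrow> real" where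
  "UD F qH q1 q2 R i = pD_H F qH q1 q2 R + (1/2 + i) * pD_1 F qH q1 q2 R
                        + (1/2 - i) * pD_2 F qH q1 q2 R"

definition U0 :: "real \<Rightarrow> real \<Rightarrow> real \<Rightarrow> real \<Rightarrow> real" where
  "U0 qH q1 q2 i = qH + (1/2 + i) * q1 + (1/2 - i) * q2"

definition DeltaOB :: "(real \<Rightarrow> real) \<Rightarrow> real \<Rightarrow> real \<Rightarrow> real \<Rightarrow> real \<Rightarrow> real" where
  "DeltaOB F qH q1 q2 R = pB_H F qH q1 q2 R - qH + (pB_1 F qH q1 q2 R - q1) / 2
                          + (pB_2 F qH q1 q2 R - q2) / 2"

definition Vrec :: "(real \<Rightarrow> real) \<Rightarrow> real \<Rightarrow> real \<Rightarrow> real \<Rightarrow> real \<Rightarrow> real" where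
  "Vrec F qH q1 q2 R =
     piB F qH q1 q2 R * (LINT i:{-1/2..1/2}|interval_measure F.
                            max (UB F qH q1 q2 R i - U0 qH q1 q2 i) 0)
   + piD F qH q1 q2 R * (LINT i:{-1/2..1/2}|interval_measure F.
                            max (UD F qH q1 q2 R i - U0 qH q1 q2 i) 0)"

end

theory Submission
  imports Defs
begin

(* Symmetry of F makes the sender equally likely to approve the two horizontally differentiated
   versions, phi1 = phi2 = beta. For a type putting weight w = (1/2+i) q1 + (1/2-i) q2 on them,
   piB (UB_i - U0_i) = qH (1 - piB) + (beta - piB) w is affine in w on [0, q1 + q2] and
   nonnegative at both ends, where it equals qH (1 - piB) and piB qL; so every type follows a buy
   recommendation. The posteriors average to the prior, piB UB_i + piD UD_i = U0_i, so every type
   also follows a don't-buy recommendation. Hence V = piB * (integral of UB_i - U0_i dF), and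
   UB_i - U0_i = DeltaOB + c i for a constant c, whose integral against the symmetric F is DeltaOB
   because the mean type is 0. *)

lemma emeasure_interval_measure_Ico:
  fixes F :: "real \<Rightarrow> real"
  assumes "a \<le> b" and "mono F" and "continuous_on UNIV F"
  shows "emeasure (interval_measure F) {a..<b} = F b - F a"
proof -
  have Icc: "emeasure (interval_measure F) {x..y} = F y - F x" if "x \<le> y" for x y
    using emeasure_interval_measure_Icc[OF that monoD[OF \<open>mono F\<close>] \<open>continuous_on UNIV F\<close>] by simp
  have "{a..b} = {a..<b} \<union> {b..b}" using \<open>a \<le> b\<close> by auto
  then have "emeasure (interval_measure F) {a..b}
      = emeasure (interval_measure F) {a..<b} + emeasure (interval_measure F) {b..b}"
    by (simp add: plus_emeasure)
  then show ?thesis using Icc[OF \<open>a \<le> b\<close>] Icc[of b b] by simp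
qed

lemma distr_uminus_interval_measure:
  fixes F :: "real \<Rightarrow> real"
  assumes "mono F" and "continuous_on UNIV F" and "\<And>x. F (-x) = 1 - F x"
  shows "distr (interval_measure F) borel uminus = interval_measure F"
proof -
  let ?M = "interval_measure F" and ?E = "range (\<lambda>(a, b). {a<..b::real})"
  have right_cont: "\<And>a. continuous (at_right a) F"
    using \<open>continuous_on UNIV F\<close>
    by (simp add: continuous_on_eq_continuous_within continuous_at_imp_continuous_within)
  have Ioc: "emeasure ?M {a<..b} = F b - F a" if "a \<le> b" for a b
    using emeasure_interval_measure_Ioc[OF that monoD[OF \<open>mono F\<close>] right_cont] by simp
  have reflect_Ioc: "emeasure (distr ?M borel uminus) {a<..b} = emeasure ?M {a<..b}" if "a \<le> b" for a b
  proof -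
    have "emeasure (distr ?M borel uminus) {a<..b} = emeasure ?M {-b..<-a}"
      by (subst emeasure_distr) (auto intro!: arg_cong[where f="emeasure ?M"])
    also have "\<dots> = F b - F a"
      using emeasure_interval_measure_Ico[of "-b" "-a" F] that assms by simp
    finally show ?thesis using Ioc[OF that] by simp
  qed
  have sets_E: "sets borel = sigma_sets UNIV ?E"
    by (subst borel_sigma_sets_Ioc) (rule sets_measure_of, simp)
  show ?thesis
  proof (rule measure_eqI_generator_eq[where \<Omega>=UNIV and E="?E" and A="\<lambda>n. {- real n<..real n}"])
    show "Int_stable ?E"
      by (auto simp: Int_stable_def)
    show "emeasure (distr ?M borel uminus) X = emeasure ?M X" if "X \<in> ?E" for X
    proof -
      obtain a b where "X = {a<..b}" using \<open>X \<in> ?E\<close> by auto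
      then show ?thesis using reflect_Ioc[of a b] by (cases "a \<le> b") auto
    qed
    show "(\<Union>n. {- real n<..real n}) = UNIV"
    proof safe
      fix x :: real
      obtain n :: nat where "\<bar>x\<bar> < real n" using reals_Archimedean2 by blast
      then have "x \<in> {- real n<..real n}" by auto
      then show "x \<in> (\<Union>n. {- real n<..real n})" by blast
    qed auto
    show "emeasure (distr ?M borel uminus) {- real n<..real n} \<noteq> \<infinity>" for n
      using reflect_Ioc[of "- real n" "real n"] Ioc[of "- real n" "real n"] by simp
  qed (use sets_E in auto)
qed

lemma set_integral_affine_reflection_invariant:
  fixes M :: "real measure"
  assumes reflect: "distr M borel uminus = M" and sets_M: "sets M = sets borel"
    and finite: "emeasure M {-h..h} < \<infinity>"
  shows "(LINT x:{-h..h}|M. a + c * x) = a * measure M {-h..h}"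
proof -
  let ?S = "{-h..h}"
  have S_sets: "?S \<in> sets M" using sets_M by simp
  have int_id: "set_integrable M ?S (\<lambda>x. x)"
    unfolding set_integrable_def
    by (rule integrableI_bounded_set_indicator[where B=h]) (use S_sets sets_M finite in auto)
  have "(LINT x:?S|M. x) = (LINT x:?S|distr M borel uminus. x)"
    using reflect by simp
  also have "\<dots> = (LINT x:?S|M. - x)"
  proof -
    have "uminus \<in> borel_measurable M"
      using borel_measurable_uminus[OF measurable_ident_sets[OF sets_M]] by simp
    moreover have "indicator ?S (- x) = (indicator ?S x :: real)" for x
      by (auto simp: indicator_def)
    ultimately show ?thesis
      unfolding set_lebesgue_integral_def by (simp add: integral_distr)
  qed
  also have "\<dots> = - (LINT x:?S|M. x)"
    using int_id by (rule set_integral_uminus)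
  finally have odd: "(LINT x:?S|M. x) = 0" by simp
  have int_const: "set_integrable M ?S (\<lambda>x. a)"
    using finite S_sets by (simp add: set_integrable_def integrable_real_indicator)
  show ?thesis
    using int_const int_id finite S_sets
    by (simp add: set_integral_add set_integral_const odd)
qed

lemma set_integral_affine_interval_measure:
  fixes F :: "real \<Rightarrow> real"
  assumes "mono F" and "continuous_on UNIV F" and "\<And>x. F (-x) = 1 - F x" and "0 \<le> h"
  shows "(LINT x:{-h..h}|interval_measure F. a + c * x) = a * (F h - F (-h))"
proof -
  have "emeasure (interval_measure F) {-h..h} = F h - F (-h)"
    using emeasure_interval_measure_Icc[OF _ monoD[OF \<open>mono F\<close>] \<open>continuous_on UNIV F\<close>] \<open>0 \<le> h\<close>
    by simp
  moreover have "F (-h) \<le> F h" using monoD[OF \<open>mono F\<close>] \<open>0 \<le> h\<close> by simp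
  ultimately show ?thesis
    using set_integral_affine_reflection_invariant[OF distr_uminus_interval_measure[OF assms(1-3)]]
    by (simp add: measure_def)
qed

lemma piB_pos:
  assumes "qH > 0" "q1 \<ge> 0" "q2 \<ge> 0" "phi1 F R \<ge> 0" "phi2 F R \<ge> 0"
  shows "piB F qH q1 q2 R > 0"
  unfolding piB_def using assms by (simp add: add_pos_nonneg)

lemma piD_pos:
  assumes "qH + q1 + q2 + qL = 1" "q1 \<ge> 0" "q2 \<ge> 0" "qL > 0" "phi1 F R \<le> 1" "phi2 F R \<le> 1"
  shows "piD F qH q1 q2 R > 0"
proof -
  have "piD F qH q1 q2 R = q1 * (1 - phi1 F R) + q2 * (1 - phi2 F R) + qL"
    unfolding piD_def piB_def using assms(1) by (simp add: algebra_simps)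
  then show ?thesis using assms by (simp add: add_nonneg_pos)
qed

lemma piB_UB_plus_piD_UD:
  assumes "piB F qH q1 q2 R \<noteq> 0" "piD F qH q1 q2 R \<noteq> 0"
  shows "piB F qH q1 q2 R * UB F qH q1 q2 R i + piD F qH q1 q2 R * UD F qH q1 q2 R i = U0 qH q1 q2 i"
  using assms unfolding UB_def UD_def U0_def pB_H_def pB_1_def pB_2_def pD_H_def pD_1_def pD_2_def
  by (simp add: field_simps)

lemma UD_le_U0_iff_U0_le_UB:
  assumes "piB F qH q1 q2 R > 0" "piD F qH q1 q2 R > 0"
  shows "UD F qH q1 q2 R i \<le> U0 qH q1 q2 i \<longleftrightarrow> U0 qH q1 q2 i \<le> UB F qH q1 q2 R i"
proof -
  let ?B = "piB F qH q1 q2 R" and ?D = "piD F qH q1 q2 R"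
  have "?D * (U0 qH q1 q2 i - UD F qH q1 q2 R i) = ?D * U0 qH q1 q2 i - ?D * UD F qH q1 q2 R i"
    by (simp add: right_diff_distrib)
  also have "\<dots> = ?D * U0 qH q1 q2 i - (U0 qH q1 q2 i - ?B * UB F qH q1 q2 R i)"
    using piB_UB_plus_piD_UD[of F qH q1 q2 R i] assms by simp
  also have "\<dots> = ?B * (UB F qH q1 q2 R i - U0 qH q1 q2 i)"
    by (simp add: piD_def algebra_simps)
  finally have eq:
    "?D * (U0 qH q1 q2 i - UD F qH q1 q2 R i) = ?B * (UB F qH q1 q2 R i - U0 qH q1 q2 i)" .
  have "UD F qH q1 q2 R i \<le> U0 qH q1 q2 i \<longleftrightarrow> 0 \<le> ?D * (U0 qH q1 q2 i - UD F qH q1 q2 R i)"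
    using assms(2) by (simp add: zero_le_mult_iff)
  also have "\<dots> \<longleftrightarrow> U0 qH q1 q2 i \<le> UB F qH q1 q2 R i"
    unfolding eq using assms(1) by (simp add: zero_le_mult_iff)
  finally show ?thesis .
qed

lemma U0_le_UB_if_phi1_eq_phi2:
  assumes phi: "phi1 F R = \<beta>" "phi2 F R = \<beta>" "0 \<le> \<beta>" "\<beta> \<le> 1"
    and q: "qH > 0" "q1 \<ge> 0" "q2 \<ge> 0" "qL \<ge> 0" "qH + q1 + q2 + qL = 1"
    and i: "i \<in> {-1/2..1/2}"
  shows "U0 qH q1 q2 i \<le> UB F qH q1 q2 R i"
proof -
  define P where "P = piB F qH q1 q2 R"
  define w where "w = (1/2 + i) * q1 + (1/2 - i) * q2"
  have P_eq: "P = qH + (q1 + q2) * \<beta>"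
    unfolding P_def piB_def phi by (simp add: algebra_simps)
  have "P > 0" unfolding P_def using piB_pos[of qH q1 q2 F R] phi q by simp
  have "0 \<le> (1/2 + i) * q1" "0 \<le> (1/2 - i) * q1" "0 \<le> (1/2 + i) * q2" "0 \<le> (1/2 - i) * q2"
    using i q by simp_all
  then have "0 \<le> w" "w \<le> q1 + q2" unfolding w_def by (simp_all add: algebra_simps)
  have "P * UB F qH q1 q2 R i = qH + \<beta> * w"
    using \<open>P > 0\<close> unfolding UB_def pB_H_def pB_1_def pB_2_def P_def[symmetric] phi w_def
    by (simp add: field_simps)
  then have "P * (UB F qH q1 q2 R i - U0 qH q1 q2 i) = qH * (1 - P) + (\<beta> - P) * w"
    unfolding U0_def w_def by (simp add: field_simps)
  also have "\<dots> = qH * (1 - \<beta>) * (q1 + q2 - w) + \<beta> * qL * w + qH * qL"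
  proof -
    have qL: "qL = 1 - qH - q1 - q2" using q(5) by simp
    show ?thesis unfolding P_eq qL by (simp add: algebra_simps)
  qed
  also have "\<dots> \<ge> 0"
    using \<open>0 \<le> w\<close> \<open>w \<le> q1 + q2\<close> phi q by simp
  finally show ?thesis using \<open>P > 0\<close> by (simp add: zero_le_mult_iff)
qed

lemma UB_minus_U0_affine:
  "UB F qH q1 q2 R i - U0 qH q1 q2 i
     = DeltaOB F qH q1 q2 R + ((pB_1 F qH q1 q2 R - q1) - (pB_2 F qH q1 q2 R - q2)) * i"
  unfolding UB_def U0_def DeltaOB_def by (simp add: field_simps)

lemma Vrec_eq_if_accepted:
  assumes "\<forall>i\<in>{-1/2..1/2}.
    U0 qH q1 q2 i \<le> UB F qH q1 q2 R i \<and> UD F qH q1 q2 R i \<le> U0 qH q1 q2 i"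
  shows "Vrec F qH q1 q2 R
    = piB F qH q1 q2 R * (LINT i:{-1/2..1/2}|interval_measure F. UB F qH q1 q2 R i - U0 qH q1 q2 i)"
proof -
  let ?M = "interval_measure F" and ?S = "{-1/2..1/2::real}"
  have "(LINT i:?S|?M. max (UB F qH q1 q2 R i - U0 qH q1 q2 i) 0)
      = (LINT i:?S|?M. UB F qH q1 q2 R i - U0 qH q1 q2 i)"
    using assms by (intro set_lebesgue_integral_cong) auto
  moreover have "(LINT i:?S|?M. max (UD F qH q1 q2 R i - U0 qH q1 q2 i) 0) = (LINT i:?S|?M. 0)"
    using assms by (intro set_lebesgue_integral_cong) auto
  ultimately show ?thesis
    unfolding Vrec_def by (simp add: set_lebesgue_integral_def)
qed

theorem proposition4:
  fixes F :: "real \<Rightarrow> real" and qH q1 q2 qL R :: real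
  assumes F_cont: "continuous_on UNIV F"
    and F_mono: "mono F"
    and F_below: "\<And>x. x \<le> -1/2 \<Longrightarrow> F x = 0"
    and F_above: "\<And>x. x \<ge> 1/2 \<Longrightarrow> F x = 1"
    and F_support: "strict_mono_on {-1/2..1/2} F"
    and F_symm: "\<And>i. i \<in> {-1/2..1/2} \<Longrightarrow> F (-i) = 1 - F i"
    and q_pos: "qH > 0" "q1 > 0" "q2 > 0" "qL > 0"
    and q_sum: "qH + q1 + q2 + qL = 1"
    and R: "0 < R" "R < 1"
  shows "(\<forall>i\<in>{-1/2..1/2}. UB F qH q1 q2 R i \<ge> U0 qH q1 q2 i
                          \<and> U0 qH q1 q2 i \<ge> UD F qH q1 q2 R i)
         \<and> Vrec F qH q1 q2 R = piB F qH q1 q2 R * DeltaOB F qH q1 q2 R"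
proof -
  have F_sym: "F (-x) = 1 - F x" for x
  proof (cases "x \<in> {-1/2..1/2}")
    case False
    then show ?thesis using F_below F_above by (cases "x \<le> -1/2") auto
  qed (rule F_symm)
  define \<beta> where "\<beta> = F (1/2 - R)"
  have phi: "phi1 F R = \<beta>" "phi2 F R = \<beta>"
    unfolding phi1_def phi2_def \<beta>_def using F_symm[of "1/2 - R"] R by simp_all
  have \<beta>: "0 \<le> \<beta>" "\<beta> \<le> 1"
    using monoD[OF F_mono, of "-1/2" "1/2 - R"] monoD[OF F_mono, of "1/2 - R" "1/2"] F_below F_above R
    unfolding \<beta>_def by auto
  have "piB F qH q1 q2 R > 0" "piD F qH q1 q2 R > 0"
    using piB_pos[of qH q1 q2 F R] piD_pos[OF q_sum, of F R] phi \<beta> q_pos by auto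
  then have accepted: "\<forall>i\<in>{-1/2..1/2}.
      U0 qH q1 q2 i \<le> UB F qH q1 q2 R i \<and> UD F qH q1 q2 R i \<le> U0 qH q1 q2 i"
    using U0_le_UB_if_phi1_eq_phi2[OF phi \<beta>, of qH q1 q2 qL] UD_le_U0_iff_U0_le_UB q_pos q_sum
    by auto
  have "Vrec F qH q1 q2 R = piB F qH q1 q2 R * (LINT i:{-1/2..1/2}|interval_measure F.
      DeltaOB F qH q1 q2 R + ((pB_1 F qH q1 q2 R - q1) - (pB_2 F qH q1 q2 R - q2)) * i)"
    unfolding Vrec_eq_if_accepted[OF accepted] UB_minus_U0_affine ..
  also have "\<dots> = piB F qH q1 q2 R * DeltaOB F qH q1 q2 R"
    using set_integral_affine_interval_measure[OF F_mono F_cont F_sym, of "1/2"] F_below F_above by simp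
  finally show ?thesis using accepted by blast
qed

end
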